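(* Let $n\ge1$, $\mu>0$, let $B^1,\dots,B^n$ be independent standard Brownian motions, $G_{1,\mu}$ an independent Gamma process, and $\|I^n_\mu(t)\|=\big(\sum_{j=1}^n|B^j(G_{1,\mu}(t))|^2\big)^{1/2}$. Then for every $t>0$, $$\|I^n_\mu(t)\|\ \stackrel{d}{=}\ G_{2,n/2}\big(2\,G_{1,\mu}(t)\big)\ \stackrel{d}{=}\ G_{2,\mu}\big(2\,G_{1,n/2}(t)\big),$$ with independent processes in each composition.
   Context: For $\gamma>0,\mu>0$, $G_{\gamma,\mu}(t)$ is a positive process whose value at time $t$ has density $\gamma\,x^{\mu\gamma-1}e^{-x^{\gamma}/t}/(t^{\mu}\Gamma(\mu))$, $x>0$. Composition of independent processes: $X(Y(t))$ has density $\int_0^\infty f_X(x,s)f_Y(s,t)\,ds$. *)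

theory Defs
  imports "HOL-Probability.Probability"
begin

definition gamma_proc_density :: "real \<Rightarrow> real \<Rightarrow> real \<Rightarrow> real \<Rightarrow> real" where
  "gamma_proc_density \<gamma> \<mu> t x =
     (if 0 < x then \<gamma> * x powr (\<mu> * \<gamma> - 1) * exp (- (x powr \<gamma>) / t) / (t powr \<mu> * Gamma \<mu>)
      else 0)"

definition gamma_proc_law :: "real \<Rightarrow> real \<Rightarrow> real \<Rightarrow> real measure" where
  "gamma_proc_law \<gamma> \<mu> t = density lborel (\<lambda>x. ennreal (gamma_proc_density \<gamma> \<mu> t x))"

text \<open>Joint law of (B^1(s),...,B^n(s)) for n independent standard Brownian motions:
  independent N(0,s) coordinates (standard deviation sqrt s).\<close>
definition bm_vector_law :: "nat \<Rightarrow> real \<Rightarrow> (nat \<Rightarrow> real) measure" where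
  "bm_vector_law n s = PiM {..<n} (\<lambda>_. density lborel (normal_density 0 (sqrt s)))"

definition bm_norm_law :: "nat \<Rightarrow> real \<Rightarrow> real measure" where
  "bm_norm_law n s = distr (bm_vector_law n s) borel (\<lambda>\<omega>. sqrt (\<Sum>j<n. \<bar>\<omega> j\<bar>\<^sup>2))"

text \<open>Law of X(Y(t)) for independent X, Y: mix the law of X(s) over the law of Y(t).\<close>
definition compose_law :: "real measure \<Rightarrow> (real \<Rightarrow> real measure) \<Rightarrow> real measure" where
  "compose_law LY LX = bind LY LX"

end

theory Submission
  imports Defs
begin

text \<open>
  At a fixed time s the squared norm of the Brownian vector is s times a
  chi-square variable, i.e. it has law G_{1,n/2}(2s); taking square roots turns this into
  G_{2,n/2}(2s).  This gives the first identity kernel by kernel.  For the second, both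
  compositions have the law of sqrt(2 t U Y) with U ~ G_{1,\<mu>}(1), Y ~ G_{1,n/2}(1)
  independent, which is symmetric in the two shapes.
\<close>

lemma nn_integral_Ioi_exhaust:
  fixes g :: "real \<Rightarrow> ennreal" and a b :: "nat \<Rightarrow> real"
  assumes [measurable]: "g \<in> borel_measurable borel"
    and inc: "incseq (\<lambda>m. {a m..b m})"
    and union: "(\<Union>m. {a m..b m}) = {0<..}"
  shows "(\<integral>\<^sup>+x. g x * indicator {0<..} x \<partial>lborel)
       = (SUP m. \<integral>\<^sup>+x. g x * indicator {a m..b m} x \<partial>lborel)"
proof -
  have pointwise: "(SUP m. g x * indicator {a m..b m} x) = g x * indicator {0<..} x" for x
  proof (cases "x \<in> {0<..}")
    case True
    then obtain m where "x \<in> {a m..b m}" using union by blast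
    then have "g x \<le> (SUP m. g x * indicator {a m..b m} x)"
      by (intro SUP_upper2[of m]) auto
    moreover have "(SUP m. g x * indicator {a m..b m} x) \<le> g x"
      by (intro SUP_least) (auto simp: indicator_def)
    ultimately show ?thesis using True by (auto intro: antisym)
  next
    case False
    then have "x \<notin> {a m..b m}" for m using union by blast
    then show ?thesis using False by simp
  qed
  have "incseq (\<lambda>m x. g x * indicator {a m..b m} x)"
    unfolding incseq_def le_fun_def
  proof (intro allI impI)
    fix m n :: nat and x :: real assume "m \<le> n"
    then have "{a m..b m} \<subseteq> {a n..b n}" using inc by (simp add: incseq_def)
    then show "g x * indicator {a m..b m} x \<le> g x * indicator {a n..b n} x"
      by (intro mult_left_mono) (auto simp: indicator_def)
  qed
  then have "(\<integral>\<^sup>+x. (SUP m. g x * indicator {a m..b m} x) \<partial>lborel)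
      = (SUP m. \<integral>\<^sup>+x. g x * indicator {a m..b m} x \<partial>lborel)"
    by (rule nn_integral_monotone_convergence_SUP) simp
  then show ?thesis by (simp only: pointwise)
qed

lemma Ioi_exhaustion:
  shows "incseq (\<lambda>m::nat. {1 / (real m + 2)..real m + 2})"
    and "(\<Union>m::nat. {1 / (real m + 2)..real m + 2}) = {0<..}"
proof -
  show "incseq (\<lambda>m::nat. {1 / (real m + 2)..real m + 2})"
    by (auto simp: incseq_def intro!: divide_left_mono)
  show "(\<Union>m::nat. {1 / (real m + 2)..real m + 2}) = {0<..}"
  proof (intro equalityI subsetI)
    fix y :: real assume "y \<in> {0<..}"
    moreover obtain m :: nat where "max y (1 / y) < real m"
      using reals_Archimedean2 by blast
    ultimately show "y \<in> (\<Union>m::nat. {1 / (real m + 2)..real m + 2})"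
      by (auto simp: field_simps intro!: exI[of _ m])
  qed (auto intro: less_le_trans[rotated])
qed

lemma monotone_pullback_exhaustion:
  fixes \<phi> :: "real \<Rightarrow> real" and lo hi :: "nat \<Rightarrow> real"
  assumes mono: "\<And>x y. 0 < x \<Longrightarrow> x < y \<Longrightarrow> \<phi> x < \<phi> y"
    and onto: "\<phi> ` {0<..} = {0<..}"
    and lo_hi: "\<And>m. 0 < lo m \<and> lo m < hi m"
    and inc: "incseq (\<lambda>m. {lo m..hi m})" and union: "(\<Union>m. {lo m..hi m}) = {0<..}"
  obtains a b :: "nat \<Rightarrow> real"
  where "\<And>m. 0 < a m" "\<And>m. a m < b m" "\<And>m. \<phi> (a m) = lo m" "\<And>m. \<phi> (b m) = hi m"
    and "incseq (\<lambda>m. {a m..b m})" "(\<Union>m. {a m..b m}) = {0<..}"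
proof -
  have le_iff: "\<phi> x \<le> \<phi> y \<longleftrightarrow> x \<le> y" if "0 < x" "0 < y" for x y
    using mono[of x y] mono[of y x] that by (cases x y rule: linorder_cases) auto
  define inv where "inv y = (SOME x. 0 < x \<and> \<phi> x = y)" for y
  have inv: "0 < inv y \<and> \<phi> (inv y) = y" if "0 < y" for y
  proof -
    have "y \<in> \<phi> ` {0<..}" using onto that by simp
    then show ?thesis unfolding inv_def by (rule someI_ex[OF imageE]) auto
  qed
  define a b where "a m = inv (lo m)" and "b m = inv (hi m)" for m
  have a: "0 < a m" "\<phi> (a m) = lo m" and b: "0 < b m" "\<phi> (b m) = hi m" for m
    using inv[of "lo m"] inv[of "hi m"] lo_hi[of m] by (auto simp: a_def b_def)
  have ab_iff: "x \<in> {a m..b m} \<longleftrightarrow> 0 < x \<and> \<phi> x \<in> {lo m..hi m}" for x m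
    using a b le_iff[of "a m" x] le_iff[of x "b m"] by (auto intro: less_le_trans)
  show thesis
  proof
    show "a m < b m" for m using a b lo_hi[of m] le_iff[of "b m" "a m"] by force
    show "incseq (\<lambda>m. {a m..b m})"
      unfolding incseq_def
    proof (intro allI impI subsetI)
      fix m n :: nat and x assume "m \<le> n" "x \<in> {a m..b m}"
      then show "x \<in> {a n..b n}" using inc unfolding ab_iff incseq_def by blast
    qed
    show "(\<Union>m. {a m..b m}) = {0<..}"
    proof (intro equalityI subsetI)
      fix x assume "x \<in> (\<Union>m. {a m..b m})"
      then show "x \<in> {0<..}" using ab_iff by blast
    next
      fix x :: real assume x: "x \<in> {0<..}"
      then have "\<phi> x \<in> {0<..}" using onto by blast
      then obtain m where "\<phi> x \<in> {lo m..hi m}" using union by blast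
      then show "x \<in> (\<Union>m. {a m..b m})" using ab_iff x by blast
    qed
  qed (use a b in auto)
qed

text \<open>Change of variables on the half-line for an increasing C^1 bijection \<phi> of (0,\<infinity>);
  the library only provides the version on compact intervals, which we exhaust.\<close>

lemma nn_integral_substitution_Ioi:
  fixes f :: "real \<Rightarrow> ennreal" and \<phi> \<phi>' :: "real \<Rightarrow> real"
  assumes f[measurable]: "f \<in> borel_measurable borel"
    and [measurable]: "\<phi> \<in> borel_measurable borel" "\<phi>' \<in> borel_measurable borel"
    and deriv: "\<And>x. 0 < x \<Longrightarrow> (\<phi> has_real_derivative \<phi>' x) (at x)"
    and cont: "continuous_on {0<..} \<phi>'"
    and nonneg: "\<And>x. 0 < x \<Longrightarrow> 0 \<le> \<phi>' x"
    and mono: "\<And>x y. 0 < x \<Longrightarrow> x < y \<Longrightarrow> \<phi> x < \<phi> y"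
    and onto: "\<phi> ` {0<..} = {0<..}"
  shows "(\<integral>\<^sup>+y. f y * indicator {0<..} y \<partial>lborel)
       = (\<integral>\<^sup>+x. f (\<phi> x) * ennreal (\<phi>' x) * indicator {0<..} x \<partial>lborel)"
proof -
  define lo hi :: "nat \<Rightarrow> real" where "lo m = 1 / (real m + 2)" and "hi m = real m + 2" for m
  have lo_hi: "0 < lo m \<and> lo m < hi m" for m
  proof -
    have "0 < lo m" "lo m \<le> 1 / 2" "2 \<le> hi m" by (auto simp: lo_def hi_def field_simps)
    then show ?thesis by linarith
  qed
  note exhaustion = Ioi_exhaustion[folded lo_def hi_def]
  obtain a b where a: "\<And>m. 0 < a m" and ab: "\<And>m. a m < b m"
    and \<phi>_ab: "\<And>m. \<phi> (a m) = lo m" "\<And>m. \<phi> (b m) = hi m"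
    and ab_exhaustion: "incseq (\<lambda>m. {a m..b m})" "(\<Union>m. {a m..b m}) = {0<..}"
    by (rule monotone_pullback_exhaustion[OF mono onto lo_hi exhaustion]) blast+
  have step: "(\<integral>\<^sup>+y. f y * indicator {lo m..hi m} y \<partial>lborel)
      = (\<integral>\<^sup>+x. f (\<phi> x) * ennreal (\<phi>' x) * indicator {a m..b m} x \<partial>lborel)" for m
  proof -
    have sub: "{a m..b m} \<subseteq> {0<..}" using a[of m] by auto
    have "(\<integral>\<^sup>+y. f y * indicator {\<phi> (a m)..\<phi> (b m)} y \<partial>lborel)
      = (\<integral>\<^sup>+x. f (\<phi> x) * ennreal (\<phi>' x) * indicator {a m..b m} x \<partial>lborel)"
    proof (rule nn_integral_substitution_aux[OF f])
      show "continuous_on {a m..b m} \<phi>'" using sub by (rule continuous_on_subset[OF cont])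
      show "x \<in> {a m..b m} \<Longrightarrow> (\<phi> has_real_derivative \<phi>' x) (at x)" for x
        using sub deriv by blast
      show "x \<in> {a m..b m} \<Longrightarrow> 0 \<le> \<phi>' x" for x using sub nonneg by blast
    qed (simp_all add: ab)
    then show ?thesis by (simp add: \<phi>_ab)
  qed
  have "(\<integral>\<^sup>+y. f y * indicator {0<..} y \<partial>lborel) = (SUP m. \<integral>\<^sup>+y. f y * indicator {lo m..hi m} y \<partial>lborel)"
    by (rule nn_integral_Ioi_exhaust[OF f exhaustion])
  also have "\<dots> = (SUP m. \<integral>\<^sup>+x. f (\<phi> x) * ennreal (\<phi>' x) * indicator {a m..b m} x \<partial>lborel)"
    by (simp only: step)
  also have "\<dots> = (\<integral>\<^sup>+x. f (\<phi> x) * ennreal (\<phi>' x) * indicator {0<..} x \<partial>lborel)"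
    by (rule nn_integral_Ioi_exhaust[OF _ ab_exhaustion, symmetric]) measurable
  finally show ?thesis .
qed

lemma gamma_density_nonneg:
  "0 < a \<Longrightarrow> 0 \<le> \<gamma> \<Longrightarrow> 0 \<le> T \<Longrightarrow> 0 \<le> gamma_proc_density \<gamma> a T x"
  by (auto simp: gamma_proc_density_def intro!: divide_nonneg_pos Gamma_real_pos
      simp del: Gamma_real_pos)

lemma gamma_density_measurable [measurable]: "gamma_proc_density \<gamma> a T \<in> borel_measurable borel"
  unfolding gamma_proc_density_def by measurable

lemma gamma1_density:
  "gamma_proc_density 1 a T x = (if 0 < x then x powr (a - 1) * exp (- x / T) / (T powr a * Gamma a) else 0)"
  by (simp add: gamma_proc_density_def)

lemma gamma_density_scale:
  assumes T: "0 < T"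
  shows "gamma_proc_density 1 a T (T * u) * T = gamma_proc_density 1 a 1 u"
proof (cases "0 < u")
  case True
  have "T powr a = T powr (a - 1) * T" using T powr_add[of T "a - 1" 1] by simp
  then show ?thesis using T True by (simp add: gamma1_density powr_mult field_simps)
qed (use T in \<open>simp add: gamma1_density zero_less_mult_iff\<close>)

text \<open>Powers: G_{\<gamma>,a}(T)^\<gamma> has the law of G_{1,a}(T), pointwise on densities
  (Jacobian of x \<mapsto> x^\<gamma>).\<close>

lemma gamma_density_power:
  assumes \<gamma>: "0 < \<gamma>" and x: "0 < x"
  shows "gamma_proc_density 1 a T (x powr \<gamma>) * (\<gamma> * x powr (\<gamma> - 1)) = gamma_proc_density \<gamma> a T x"
proof -
  have "(x powr \<gamma>) powr (a - 1) * x powr (\<gamma> - 1) = x powr (a * \<gamma> - 1)"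
    using x by (simp add: powr_powr powr_add[symmetric] algebra_simps)
  then show ?thesis using x \<gamma>
    by (simp add: gamma_proc_density_def mult_ac)
qed

lemma nn_integral_gamma1_scale:
  fixes F :: "real \<Rightarrow> ennreal"
  assumes T: "0 < T" and a: "0 < a" and [measurable]: "F \<in> borel_measurable borel"
  shows "(\<integral>\<^sup>+s. ennreal (gamma_proc_density 1 a T s) * F s \<partial>lborel)
       = (\<integral>\<^sup>+u. ennreal (gamma_proc_density 1 a 1 u) * F (T * u) \<partial>lborel)"
proof -
  let ?h = "\<lambda>s. ennreal (gamma_proc_density 1 a T s) * F s"
  have "(\<integral>\<^sup>+s. ?h s \<partial>lborel) = \<bar>T\<bar> * (\<integral>\<^sup>+u. ?h (0 + T * u) \<partial>lborel)"
    by (rule nn_integral_real_affine) (use T in auto)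
  then have "(\<integral>\<^sup>+s. ?h s \<partial>lborel) = ennreal T * (\<integral>\<^sup>+u. ?h (T * u) \<partial>lborel)"
    using T by simp
  also have "\<dots> = (\<integral>\<^sup>+u. ennreal T * ?h (T * u) \<partial>lborel)"
    by (rule nn_integral_cmult[symmetric]) measurable
  also have "\<dots> = (\<integral>\<^sup>+u. ennreal (gamma_proc_density 1 a T (T * u) * T) * F (T * u) \<partial>lborel)"
    using T a by (simp add: ennreal_mult' gamma_density_nonneg mult_ac)
  finally show ?thesis by (simp only: gamma_density_scale[OF T])
qed

lemma nn_integral_gamma_power:
  fixes f :: "real \<Rightarrow> ennreal"
  assumes \<gamma>: "0 < \<gamma>" and a: "0 < a" and T: "0 < T" and [measurable]: "f \<in> borel_measurable borel"
  shows "(\<integral>\<^sup>+x. ennreal (gamma_proc_density \<gamma> a T x) * f x \<partial>lborel)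
       = (\<integral>\<^sup>+y. ennreal (gamma_proc_density 1 a T y) * f (y powr (1 / \<gamma>)) \<partial>lborel)"
proof -
  let ?g = "\<lambda>y. ennreal (gamma_proc_density 1 a T y) * f (y powr (1 / \<gamma>))"
  have "(\<integral>\<^sup>+y. ?g y \<partial>lborel) = (\<integral>\<^sup>+y. ?g y * indicator {0<..} y \<partial>lborel)"
    by (intro nn_integral_cong) (auto simp: gamma1_density indicator_def)
  also have "\<dots> = (\<integral>\<^sup>+x. ?g (x powr \<gamma>) * ennreal (\<gamma> * x powr (\<gamma> - 1)) * indicator {0<..} x \<partial>lborel)"
  proof (rule nn_integral_substitution_Ioi)
    show "(\<lambda>x. x powr \<gamma>) ` {0<..} = {0<..}"
    proof (intro equalityI subsetI)
      fix y :: real assume "y \<in> {0<..}"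
      then have "y = (y powr (1 / \<gamma>)) powr \<gamma>" "y powr (1 / \<gamma>) \<in> {0<..}"
        using \<gamma> by (simp_all add: powr_powr)
      then show "y \<in> (\<lambda>x. x powr \<gamma>) ` {0<..}" by blast
    qed auto
    show "((\<lambda>x. x powr \<gamma>) has_real_derivative \<gamma> * x powr (\<gamma> - 1)) (at x)" if "0 < x" for x
      using that by (auto intro!: derivative_eq_intros)
    show "continuous_on {0<..} (\<lambda>x. \<gamma> * x powr (\<gamma> - 1))"
      by (intro continuous_intros) auto
    show "x powr \<gamma> < y powr \<gamma>" if "0 < x" "x < y" for x y
      using that \<gamma> by (simp add: powr_less_mono2)
  qed (use \<gamma> in simp_all)
  also have "\<dots> = (\<integral>\<^sup>+x. ennreal (gamma_proc_density \<gamma> a T x) * f x \<partial>lborel)"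
  proof (intro nn_integral_cong)
    fix x :: real
    show "?g (x powr \<gamma>) * ennreal (\<gamma> * x powr (\<gamma> - 1)) * indicator {0<..} x
        = ennreal (gamma_proc_density \<gamma> a T x) * f x"
    proof (cases "0 < x")
      case True
      then have "ennreal (gamma_proc_density 1 a T (x powr \<gamma>)) * ennreal (\<gamma> * x powr (\<gamma> - 1))
          = ennreal (gamma_proc_density \<gamma> a T x)"
        using \<gamma> a T by (simp add: ennreal_mult'[symmetric] gamma_density_nonneg gamma_density_power)
      then show ?thesis using True \<gamma> by (simp add: powr_powr mult_ac)
    qed (simp add: gamma_proc_density_def)
  qed
  finally show ?thesis by simp
qed

lemma nn_integral_gamma2_sqrt:
  fixes f :: "real \<Rightarrow> ennreal"
  assumes a: "0 < a" and T: "0 < T" and [measurable]: "f \<in> borel_measurable borel"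
  shows "(\<integral>\<^sup>+x. ennreal (gamma_proc_density 2 a T x) * f x \<partial>lborel)
       = (\<integral>\<^sup>+y. ennreal (gamma_proc_density 1 a T y) * f (sqrt y) \<partial>lborel)"
proof -
  have "(\<integral>\<^sup>+x. ennreal (gamma_proc_density 2 a T x) * f x \<partial>lborel)
      = (\<integral>\<^sup>+y. ennreal (gamma_proc_density 1 a T y) * f (y powr (1 / 2)) \<partial>lborel)"
    by (rule nn_integral_gamma_power) (use a T in auto)
  also have "\<dots> = (\<integral>\<^sup>+y. ennreal (gamma_proc_density 1 a T y) * f (sqrt y) \<partial>lborel)"
    by (intro nn_integral_cong) (auto simp: gamma1_density powr_half_sqrt)
  finally show ?thesis .
qed

text \<open>The standard Gamma density has total mass one (Euler's integral).\<close>

lemma nn_integral_gamma1_standard: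
  assumes a: "0 < a"
  shows "(\<integral>\<^sup>+y. ennreal (gamma_proc_density 1 a 1 y) \<partial>lborel) = 1"
proof -
  have "(\<integral>\<^sup>+y. ennreal (gamma_proc_density 1 a 1 y) \<partial>lborel)
     = (\<integral>\<^sup>+y. ennreal (1 / Gamma a) * ennreal (indicator {0..} y * y powr (a - 1) / exp y) \<partial>lborel)"
    using a by (intro nn_integral_cong)
      (auto simp: ennreal_mult'[symmetric] gamma1_density indicator_def exp_minus field_simps)
  also have "\<dots> = ennreal (1 / Gamma a) * ennreal (Gamma a)"
    using a by (subst nn_integral_cmult) (auto simp: Gamma_conv_nn_integral_real)
  also have "\<dots> = 1"
    using Gamma_real_pos[OF a] by (simp flip: ennreal_mult)
  finally show ?thesis .
qed

lemma prob_space_gamma_law: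
  assumes \<gamma>: "0 < \<gamma>" and a: "0 < a" and T: "0 < T"
  shows "prob_space (gamma_proc_law \<gamma> a T)"
proof (rule prob_spaceI)
  have "emeasure (gamma_proc_law \<gamma> a T) UNIV = (\<integral>\<^sup>+x. ennreal (gamma_proc_density \<gamma> a T x) * 1 \<partial>lborel)"
    by (simp add: gamma_proc_law_def emeasure_density)
  also have "\<dots> = (\<integral>\<^sup>+y. ennreal (gamma_proc_density 1 a T y) * 1 \<partial>lborel)"
    by (rule nn_integral_gamma_power[OF \<gamma> a T]) simp
  also have "\<dots> = (\<integral>\<^sup>+u. ennreal (gamma_proc_density 1 a 1 u) * 1 \<partial>lborel)"
    by (rule nn_integral_gamma1_scale[OF T a]) simp
  also have "\<dots> = 1"
    using nn_integral_gamma1_standard[OF a] by simp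
  finally show "emeasure (gamma_proc_law \<gamma> a T) (space (gamma_proc_law \<gamma> a T)) = 1"
    by (simp add: gamma_proc_law_def)
qed

lemma gamma2_half_density_normal:
  assumes v: "0 < v" and x: "0 < x"
  shows "gamma_proc_density 2 (1 / 2) (2 * v) x = 2 * normal_density 0 (sqrt v) x"
proof -
  have "(2 * v) powr (1 / 2) * sqrt pi = sqrt (2 * pi * v)"
    using v by (simp add: powr_half_sqrt real_sqrt_mult)
  then show ?thesis using v x
    by (simp add: gamma_proc_density_def normal_density_def Gamma_one_half_real field_simps)
qed

lemma nn_integral_even:
  fixes h :: "real \<Rightarrow> ennreal"
  assumes [measurable]: "h \<in> borel_measurable borel" and even: "\<And>y. h (- y) = h y"
  shows "(\<integral>\<^sup>+y. h y \<partial>lborel) = 2 * (\<integral>\<^sup>+y. h y * indicator {0<..} y \<partial>lborel)"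
proof -
  have "(\<integral>\<^sup>+y. h y \<partial>lborel) = (\<integral>\<^sup>+y. h y * indicator {0<..} y + h y * indicator {..0} y \<partial>lborel)"
    by (intro nn_integral_cong) (auto simp: indicator_def)
  also have "\<dots> = (\<integral>\<^sup>+y. h y * indicator {0<..} y \<partial>lborel) + (\<integral>\<^sup>+y. h y * indicator {..0} y \<partial>lborel)"
    by (rule nn_integral_add) auto
  also have "(\<integral>\<^sup>+y. h y * indicator {..0} y \<partial>lborel) = (\<integral>\<^sup>+y. h (- y) * indicator {..0} (- y) \<partial>lborel)"
    by (subst lborel_distr_uminus[symmetric]) (simp add: nn_integral_distr)
  also have "\<dots> = (\<integral>\<^sup>+y. h y * indicator {0<..} y \<partial>lborel)"
    using AE_lborel_singleton[of "0::real"]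
    by (intro nn_integral_cong_AE) (auto elim!: eventually_mono simp: even indicator_def)
  finally show ?thesis by (simp add: mult_2)
qed

lemma nn_integral_normal_square:
  fixes g :: "real \<Rightarrow> ennreal"
  assumes v: "0 < v" and [measurable]: "g \<in> borel_measurable borel"
  shows "(\<integral>\<^sup>+y. ennreal (normal_density 0 (sqrt v) y) * g (y\<^sup>2) \<partial>lborel)
       = (\<integral>\<^sup>+w. ennreal (gamma_proc_density 1 (1 / 2) (2 * v) w) * g w \<partial>lborel)"
proof -
  have "(\<integral>\<^sup>+y. ennreal (normal_density 0 (sqrt v) y) * g (y\<^sup>2) \<partial>lborel)
      = 2 * (\<integral>\<^sup>+y. ennreal (normal_density 0 (sqrt v) y) * g (y\<^sup>2) * indicator {0<..} y \<partial>lborel)"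
    by (rule nn_integral_even) (auto simp: normal_density_def)
  also have "\<dots> = (\<integral>\<^sup>+y. ennreal (gamma_proc_density 2 (1 / 2) (2 * v) y) * g (y\<^sup>2) \<partial>lborel)"
  proof (subst nn_integral_cmult[symmetric], measurable, intro nn_integral_cong)
    fix y :: real
    show "2 * (ennreal (normal_density 0 (sqrt v) y) * g (y\<^sup>2) * indicator {0<..} y)
        = ennreal (gamma_proc_density 2 (1 / 2) (2 * v) y) * g (y\<^sup>2)"
    proof (cases "0 < y")
      case True
      have "ennreal (gamma_proc_density 2 (1 / 2) (2 * v) y) = 2 * ennreal (normal_density 0 (sqrt v) y)"
        by (simp add: gamma2_half_density_normal[OF v True] ennreal_mult)
      then show ?thesis using True by (simp add: mult.assoc)
    qed (simp add: gamma_proc_density_def)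
  qed
  also have "\<dots> = (\<integral>\<^sup>+w. ennreal (gamma_proc_density 1 (1 / 2) (2 * v) w) * g ((sqrt w)\<^sup>2) \<partial>lborel)"
    by (rule nn_integral_gamma2_sqrt) (use v in auto)
  also have "\<dots> = (\<integral>\<^sup>+w. ennreal (gamma_proc_density 1 (1 / 2) (2 * v) w) * g w \<partial>lborel)"
    by (intro nn_integral_cong) (auto simp: gamma1_density)
  finally show ?thesis .
qed

lemma beta_integral_scaled:
  assumes a: "0 < a" and b: "0 < b" and w: "0 < w"
  shows "(\<integral>\<^sup>+u. ennreal (indicator {0..w} u * (u powr (a - 1) * (w - u) powr (b - 1))) \<partial>lborel)
       = ennreal (w powr (a + b - 1) * Beta a b)"
proof -
  let ?h = "\<lambda>u. ennreal (indicator {0..w} u * (u powr (a - 1) * (w - u) powr (b - 1)))"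
  let ?beta = "\<lambda>r. indicator {0..1} r * (r powr (a - 1) * (1 - r) powr (b - 1))"
  have scaled: "w * (indicator {0..w} (w * r) * ((w * r) powr (a - 1) * (w - w * r) powr (b - 1)))
      = w powr (a + b - 1) * ?beta r" for r
  proof (cases "r \<in> {0..1}")
    case True
    have "w powr (a + b - 1) = w powr (a - 1) * w powr (b - 1) * w"
      using w powr_add[of w "a - 1" "b - 1"] powr_add[of w "a - 1 + (b - 1)" 1]
      by (simp add: algebra_simps)
    moreover have "w - w * r = w * (1 - r)" by (simp add: algebra_simps)
    ultimately show ?thesis
      using True w by (simp add: powr_mult mult_ac mult_le_cancel_left1)
  qed (use w in \<open>auto simp: indicator_def mult_le_cancel_left1 zero_le_mult_iff\<close>)
  have "(\<integral>\<^sup>+u. ?h u \<partial>lborel) = \<bar>w\<bar> * (\<integral>\<^sup>+r. ?h (0 + w * r) \<partial>lborel)"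
    by (rule nn_integral_real_affine) (use w in auto)
  also have "\<dots> = (\<integral>\<^sup>+r. ennreal (w powr (a + b - 1)) * ennreal (?beta r) \<partial>lborel)"
    using w by (subst nn_integral_cmult[symmetric])
      (auto simp: ennreal_mult'[symmetric] scaled intro!: nn_integral_cong)
  also have "\<dots> = ennreal (w powr (a + b - 1)) * ennreal (Beta a b)"
    using nn_integral_has_integral_lebesgue[OF _ has_integral_Beta_real[OF a b]]
    by (subst nn_integral_cmult) auto
  also have "\<dots> = ennreal (w powr (a + b - 1) * Beta a b)"
    using a b by (subst ennreal_mult) (auto simp: Beta_def)
  finally show ?thesis .
qed

lemma gamma_density_product:
  assumes T: "0 < T" and w: "0 < w"
  shows "gamma_proc_density 1 a T u * gamma_proc_density 1 b T (w - u)
       = exp (- w / T) / (T powr a * Gamma a * (T powr b * Gamma b))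
         * (indicator {0..w} u * (u powr (a - 1) * (w - u) powr (b - 1)))"
proof (cases "0 < u \<and> u < w")
  case True
  have "exp (- u / T) * exp (- (w - u) / T) = exp (- w / T)"
    using T by (simp add: exp_add[symmetric] field_simps)
  then show ?thesis using True by (simp add: gamma1_density indicator_def field_simps)
qed (auto simp: gamma1_density indicator_def)

lemma gamma_convolution:
  assumes a: "0 < a" and b: "0 < b" and T: "0 < T"
  shows "(\<integral>\<^sup>+u. ennreal (gamma_proc_density 1 a T u) * ennreal (gamma_proc_density 1 b T (w - u)) \<partial>lborel)
       = ennreal (gamma_proc_density 1 (a + b) T w)"
proof (cases "0 < w")
  case False
  then have "ennreal (gamma_proc_density 1 a T u) * ennreal (gamma_proc_density 1 b T (w - u)) = 0" for u
    by (simp add: gamma1_density del: mult_eq_0_iff)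
  then show ?thesis using False by (simp add: gamma1_density del: mult_eq_0_iff)
next
  case w: True
  define C where "C = exp (- w / T) / (T powr a * Gamma a * (T powr b * Gamma b))"
  have C: "0 \<le> C" using a b unfolding C_def by (auto intro!: divide_nonneg_pos)
  have "(\<integral>\<^sup>+u. ennreal (gamma_proc_density 1 a T u) * ennreal (gamma_proc_density 1 b T (w - u)) \<partial>lborel)
      = (\<integral>\<^sup>+u. ennreal C * ennreal (indicator {0..w} u * (u powr (a - 1) * (w - u) powr (b - 1))) \<partial>lborel)"
    using a b T C gamma_density_product[OF T w]
    by (intro nn_integral_cong) (simp add: ennreal_mult'[symmetric] gamma_density_nonneg C_def)
  also have "\<dots> = ennreal C * ennreal (w powr (a + b - 1) * Beta a b)"
    by (subst nn_integral_cmult) (auto simp: beta_integral_scaled[OF a b w])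
  also have "\<dots> = ennreal (gamma_proc_density 1 (a + b) T w)"
  proof -
    have "Gamma a \<noteq> 0" "Gamma b \<noteq> 0" "Gamma (a + b) \<noteq> 0"
      using Gamma_real_pos[OF a] Gamma_real_pos[OF b] Gamma_real_pos[OF add_pos_pos[OF a b]] by linarith+
    then have "C * (w powr (a + b - 1) * Beta a b) = gamma_proc_density 1 (a + b) T w"
      using w a b T by (simp add: C_def Beta_def gamma1_density powr_add field_simps)
    then show ?thesis using C by (simp flip: ennreal_mult')
  qed
  finally show ?thesis .
qed

lemma nn_integral_gamma1_sum:
  fixes f :: "real \<Rightarrow> ennreal"
  assumes a: "0 < a" and b: "0 < b" and T: "0 < T" and [measurable]: "f \<in> borel_measurable borel"
  shows "(\<integral>\<^sup>+u. ennreal (gamma_proc_density 1 a T u)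
            * (\<integral>\<^sup>+w. ennreal (gamma_proc_density 1 b T w) * f (u + w) \<partial>lborel) \<partial>lborel)
       = (\<integral>\<^sup>+z. ennreal (gamma_proc_density 1 (a + b) T z) * f z \<partial>lborel)"
proof -
  let ?k = "\<lambda>u z. ennreal (gamma_proc_density 1 a T u) * ennreal (gamma_proc_density 1 b T (z - u))"
  have shift: "ennreal (gamma_proc_density 1 a T u) * (\<integral>\<^sup>+w. ennreal (gamma_proc_density 1 b T w) * f (u + w) \<partial>lborel)
      = (\<integral>\<^sup>+z. ?k u z * f z \<partial>lborel)" for u
  proof -
    have "(\<integral>\<^sup>+z. ?k u z * f z \<partial>lborel) = (\<integral>\<^sup>+w. ?k u (u + w) * f (u + w) \<partial>lborel)"
      using nn_integral_real_affine[where c=1 and t=u, of "\<lambda>z. ?k u z * f z"] by simp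
    then show ?thesis by (subst nn_integral_cmult[symmetric]) (auto simp: mult.assoc)
  qed
  have "(\<integral>\<^sup>+u. ennreal (gamma_proc_density 1 a T u)
            * (\<integral>\<^sup>+w. ennreal (gamma_proc_density 1 b T w) * f (u + w) \<partial>lborel) \<partial>lborel)
      = (\<integral>\<^sup>+u. \<integral>\<^sup>+z. ?k u z * f z \<partial>lborel \<partial>lborel)"
    by (simp only: shift)
  also have "\<dots> = (\<integral>\<^sup>+z. \<integral>\<^sup>+u. ?k u z * f z \<partial>lborel \<partial>lborel)"
    by (rule lborel_pair.Fubini'[symmetric]) measurable
  also have "\<dots> = (\<integral>\<^sup>+z. (\<integral>\<^sup>+u. ?k u z \<partial>lborel) * f z \<partial>lborel)"
    by (intro nn_integral_cong) (simp add: nn_integral_multc)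
  also have "\<dots> = (\<integral>\<^sup>+z. ennreal (gamma_proc_density 1 (a + b) T z) * f z \<partial>lborel)"
    by (simp only: gamma_convolution[OF a b T])
  finally show ?thesis .
qed

lemma nn_integral_sum_squares_normal:
  fixes n :: nat and f :: "real \<Rightarrow> ennreal"
  assumes n: "1 \<le> n" and v: "0 < v" and f: "f \<in> borel_measurable borel"
  shows "(\<integral>\<^sup>+\<omega>. f (\<Sum>j<n. (\<omega> j)\<^sup>2) \<partial>PiM {..<n} (\<lambda>_. density lborel (normal_density 0 (sqrt v))))
       = (\<integral>\<^sup>+w. ennreal (gamma_proc_density 1 (real n / 2) (2 * v) w) * f w \<partial>lborel)"
proof -
  define N where "N = density lborel (\<lambda>x. ennreal (normal_density 0 (sqrt v) x))"
  interpret N: prob_space N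
    unfolding N_def using v by (intro prob_space_normal_density) simp
  interpret P: product_sigma_finite "\<lambda>_::nat. N"
    by unfold_locales
  have sets_N [measurable_cong]: "sets N = sets borel" by (simp add: N_def)
  have square: "(\<integral>\<^sup>+y. g (y\<^sup>2) \<partial>N) = (\<integral>\<^sup>+w. ennreal (gamma_proc_density 1 (1 / 2) (2 * v) w) * g w \<partial>lborel)"
    if [measurable]: "g \<in> borel_measurable borel" for g
    unfolding N_def by (subst nn_integral_density) (auto intro!: nn_integral_normal_square[OF v])
  have "(\<integral>\<^sup>+\<omega>. f (\<Sum>j<n. (\<omega> j)\<^sup>2) \<partial>PiM {..<n} (\<lambda>_. N))
       = (\<integral>\<^sup>+w. ennreal (gamma_proc_density 1 (real n / 2) (2 * v) w) * f w \<partial>lborel)"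
    using n f
  proof (induction n arbitrary: f rule: nat_induct_at_least)
    case base
    note f [measurable] = base
    have "(\<integral>\<^sup>+\<omega>. f (\<Sum>j<1. (\<omega> j)\<^sup>2) \<partial>PiM {..<1::nat} (\<lambda>_. N))
        = (\<integral>\<^sup>+\<omega>. f ((\<omega> 0)\<^sup>2) \<partial>PiM {0::nat} (\<lambda>_. N))"
    proof -
      have one: "{..<1::nat} = {0}" by auto
      show ?thesis unfolding one by simp
    qed
    also have "\<dots> = (\<integral>\<^sup>+y. f (y\<^sup>2) \<partial>N)"
      by (intro P.product_nn_integral_singleton) measurable
    finally show ?case by (simp add: square)
  next
    case (Suc n)
    note f [measurable] = Suc.prems
    define F where "F u = (\<integral>\<^sup>+w. ennreal (gamma_proc_density 1 (1 / 2) (2 * v) w) * f (u + w) \<partial>lborel)" for u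
    have F [measurable]: "F \<in> borel_measurable borel" unfolding F_def by measurable
    have F_square: "(\<integral>\<^sup>+y. f (c + y\<^sup>2) \<partial>N) = F c" for c
      unfolding F_def by (rule square) measurable
    have "(\<integral>\<^sup>+\<omega>. f (\<Sum>j<Suc n. (\<omega> j)\<^sup>2) \<partial>PiM (insert n {..<n}) (\<lambda>_. N))
        = (\<integral>\<^sup>+x. (\<integral>\<^sup>+y. f (\<Sum>j<Suc n. ((x(n := y)) j)\<^sup>2) \<partial>N) \<partial>PiM {..<n} (\<lambda>_. N))"
      by (rule P.product_nn_integral_insert) auto
    also have "\<dots> = (\<integral>\<^sup>+x. F (\<Sum>j<n. (x j)\<^sup>2) \<partial>PiM {..<n} (\<lambda>_. N))"
      by (intro nn_integral_cong) (simp add: F_square)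
    also have "\<dots> = (\<integral>\<^sup>+u. ennreal (gamma_proc_density 1 (real n / 2) (2 * v) u) * F u \<partial>lborel)"
      by (rule Suc.IH[OF F])
    also have "\<dots> = (\<integral>\<^sup>+z. ennreal (gamma_proc_density 1 (real n / 2 + 1 / 2) (2 * v) z) * f z \<partial>lborel)"
      unfolding F_def by (rule nn_integral_gamma1_sum) (use Suc.hyps v in auto)
    also have "real n / 2 + 1 / 2 = real (Suc n) / 2" by (simp add: field_simps)
    finally show ?case by (simp add: lessThan_Suc)
  qed
  then show ?thesis by (simp add: N_def)
qed

text \<open>The normal density only depends on the square of its standard deviation, so the
  possibly negative time s may be replaced by |s|.\<close>

lemma normal_density_sqrt_abs: "normal_density 0 (sqrt s) = normal_density 0 (sqrt \<bar>s\<bar>)"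
proof -
  have "(sqrt s)\<^sup>2 = \<bar>s\<bar>"
  proof (cases "0 \<le> s")
    case False
    then have "sqrt s = - sqrt (- s)" by (simp add: real_sqrt_minus)
    then show ?thesis using False by simp
  qed simp
  then show ?thesis by (simp add: normal_density_def fun_eq_iff)
qed

lemma bm_norm_law_nonzero:
  assumes n: "1 \<le> n" and s: "s \<noteq> 0"
  shows "bm_norm_law n s = gamma_proc_law 2 (real n / 2) (2 * \<bar>s\<bar>)"
proof (rule measure_eqI)
  define v where "v = \<bar>s\<bar>"
  have v: "0 < v" using s by (simp add: v_def)
  define P where "P = PiM {..<n} (\<lambda>_. density lborel (\<lambda>x. ennreal (normal_density 0 (sqrt v) x)))"
  have vector_law: "bm_vector_law n s = P"
    unfolding bm_vector_law_def P_def v_def by (simp add: normal_density_sqrt_abs[of s])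
  have norm [measurable]: "(\<lambda>\<omega>. sqrt (\<Sum>j<n. (\<omega> j)\<^sup>2)) \<in> borel_measurable P"
    unfolding P_def by measurable
  show "sets (bm_norm_law n s) = sets (gamma_proc_law 2 (real n / 2) (2 * \<bar>s\<bar>))"
    by (simp add: bm_norm_law_def gamma_proc_law_def)
  fix A assume "A \<in> sets (bm_norm_law n s)"
  then have A [measurable]: "A \<in> sets borel" by (simp add: bm_norm_law_def)
  have "emeasure (bm_norm_law n s) A = emeasure P ((\<lambda>\<omega>. sqrt (\<Sum>j<n. (\<omega> j)\<^sup>2)) -` A \<inter> space P)"
    unfolding bm_norm_law_def vector_law by (subst emeasure_distr) auto
  also have "\<dots> = (\<integral>\<^sup>+\<omega>. indicator ((\<lambda>\<omega>. sqrt (\<Sum>j<n. (\<omega> j)\<^sup>2)) -` A \<inter> space P) \<omega> \<partial>P)"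
    by (rule nn_integral_indicator[symmetric]) measurable
  also have "\<dots> = (\<integral>\<^sup>+\<omega>. indicator A (sqrt (\<Sum>j<n. (\<omega> j)\<^sup>2)) \<partial>P)"
    by (intro nn_integral_cong) (auto simp: indicator_def)
  also have "\<dots> = (\<integral>\<^sup>+w. ennreal (gamma_proc_density 1 (real n / 2) (2 * v) w) * indicator A (sqrt w) \<partial>lborel)"
    unfolding P_def by (rule nn_integral_sum_squares_normal[OF n v]) measurable
  also have "\<dots> = (\<integral>\<^sup>+x. ennreal (gamma_proc_density 2 (real n / 2) (2 * v) x) * indicator A x \<partial>lborel)"
    by (rule nn_integral_gamma2_sqrt[symmetric]) (use n v in auto)
  also have "\<dots> = emeasure (gamma_proc_law 2 (real n / 2) (2 * \<bar>s\<bar>)) A"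
    unfolding gamma_proc_law_def v_def by (simp add: emeasure_density)
  finally show "emeasure (bm_norm_law n s) A = emeasure (gamma_proc_law 2 (real n / 2) (2 * \<bar>s\<bar>)) A" .
qed

text \<open>At time 0 both laws are the null measure (the density normal_density 0 0 vanishes).\<close>

lemma bm_norm_law_zero:
  assumes n: "1 \<le> n"
  shows "bm_norm_law n 0 = gamma_proc_law 2 (real n / 2) (2 * \<bar>0\<bar>)"
proof (rule measure_eqI)
  define Z :: "real measure" where "Z = density lborel (\<lambda>_. 0)"
  interpret Z: finite_measure Z
    unfolding Z_def by (rule finite_measureI) (simp add: emeasure_density)
  interpret P: product_sigma_finite "\<lambda>_::nat. Z" by unfold_locales
  have vector_law: "bm_vector_law n 0 = PiM {..<n} (\<lambda>_. Z)"
    by (simp add: bm_vector_law_def Z_def normal_density_def)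
  have "emeasure (PiM {..<n} (\<lambda>_. Z)) (space (PiM {..<n} (\<lambda>_. Z))) = (\<Prod>i<n. emeasure Z (space Z))"
    unfolding space_PiM by (rule P.emeasure_PiM) auto
  also have "\<dots> = 0" using n by (cases n) (auto simp: Z_def emeasure_density)
  finally have null: "emeasure (PiM {..<n} (\<lambda>_. Z)) (space (PiM {..<n} (\<lambda>_. Z))) = 0" .
  show "sets (bm_norm_law n 0) = sets (gamma_proc_law 2 (real n / 2) (2 * \<bar>0\<bar>))"
    by (simp add: bm_norm_law_def gamma_proc_law_def)
  fix A assume "A \<in> sets (bm_norm_law n 0)"
  then have A [measurable]: "A \<in> sets borel" by (simp add: bm_norm_law_def)
  have "emeasure (bm_norm_law n 0) A \<le> emeasure (PiM {..<n} (\<lambda>_. Z)) (space (PiM {..<n} (\<lambda>_. Z)))"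
    unfolding bm_norm_law_def vector_law
    by (subst emeasure_distr) (auto intro!: emeasure_mono simp: Z_def)
  moreover have "gamma_proc_density 2 (real n / 2) (2 * \<bar>0\<bar>) = (\<lambda>_. 0)"
    by (simp add: gamma_proc_density_def fun_eq_iff)
  ultimately show "emeasure (bm_norm_law n 0) A = emeasure (gamma_proc_law 2 (real n / 2) (2 * \<bar>0\<bar>)) A"
    using null by (simp add: gamma_proc_law_def emeasure_density)
qed

lemma bm_norm_law_gamma:
  assumes n: "1 \<le> n"
  shows "bm_norm_law n = (\<lambda>s. gamma_proc_law 2 (real n / 2) (2 * \<bar>s\<bar>))"
proof
  fix s :: real
  show "bm_norm_law n s = gamma_proc_law 2 (real n / 2) (2 * \<bar>s\<bar>)"
    using bm_norm_law_nonzero[OF n, of s] bm_norm_law_zero[OF n] by (cases "s = 0") auto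
qed

text \<open>For a negative time parameter the formula for G_{2,a} is not a subprobability measure
  (its density grows like exp(x^2/|T|)), so such kernel values are ignored by bind.\<close>

lemma gamma2_law_negative_not_subprob:
  assumes a: "0 < a" and T: "T < 0"
  shows "\<not> subprob_space (gamma_proc_law 2 a T)"
proof
  assume sub: "subprob_space (gamma_proc_law 2 a T)"
  define D where "D = T powr a * Gamma a"
  have D: "0 < D" unfolding D_def using T a by (simp add: powr_gt_zero)
  define c where "c = 2 / (\<bar>T\<bar> * D)"
  have c: "0 < c" unfolding c_def using T D by (intro divide_pos_pos mult_pos_pos) auto
  have lower: "c \<le> gamma_proc_density 2 a T x" if x: "1 \<le> x" for x
  proof -
    have "1 \<le> x powr (2 * a + 1)" using x a by (intro ge_one_powr_ge_zero) auto
    also have "x powr (2 * a + 1) = x powr (2 * a - 1) * x\<^sup>2"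
      using x powr_add[of x "2 * a - 1" 2] by (simp add: powr_numeral add.commute)
    also have "x\<^sup>2 \<le> \<bar>T\<bar> * exp (- (x\<^sup>2) / T)"
      using exp_ge_add_one_self[of "x\<^sup>2 / \<bar>T\<bar>"] T by (simp add: field_simps)
    finally have "1 \<le> x powr (2 * a - 1) * (\<bar>T\<bar> * exp (- (x\<^sup>2) / T))"
      using x by (simp add: mult_left_mono)
    then show ?thesis
      using x D T by (simp add: c_def D_def gamma_proc_density_def field_simps)
  qed
  define R where "R = 2 + 1 / c"
  have "ennreal (c * (R - 1)) = (\<integral>\<^sup>+x. ennreal c * indicator {1..R} x \<partial>lborel)"
    using c by (subst nn_integral_cmult) (auto simp: R_def ennreal_mult)
  also have "\<dots> \<le> (\<integral>\<^sup>+x. ennreal (gamma_proc_density 2 a T x) * indicator {1..R} x \<partial>lborel)"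
    using lower by (intro nn_integral_mono) (auto simp: indicator_def intro!: ennreal_leI)
  also have "\<dots> = emeasure (gamma_proc_law 2 a T) {1..R}"
    unfolding gamma_proc_law_def by (simp add: emeasure_density)
  also have "\<dots> \<le> 1" using sub by (rule subprob_space.subprob_emeasure_le_1)
  finally have "c * (R - 1) \<le> 1" by (simp add: ennreal_le_1)
  moreover have "c * (R - 1) = c + 1" using c by (simp add: R_def field_simps)
  ultimately show False using c by simp
qed

lemma subprob_space_gamma_law:
  assumes \<gamma>: "0 < \<gamma>" and a: "0 < a" and T: "0 \<le> T"
  shows "subprob_space (gamma_proc_law \<gamma> a T)"
proof (cases "T = 0")
  case True
  then have "gamma_proc_density \<gamma> a T = (\<lambda>_. 0)"
    by (simp add: gamma_proc_density_def fun_eq_iff)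
  then show ?thesis
    unfolding gamma_proc_law_def by (intro subprob_spaceI) (auto simp: emeasure_density)
next
  case False
  then show ?thesis
    using prob_space_gamma_law[OF \<gamma> a] T by (simp add: prob_space_imp_subprob_space)
qed

lemma gamma_kernel_measurable:
  assumes \<gamma>: "0 < \<gamma>" and a: "0 < a" and M: "sets M = sets borel"
  shows "(\<lambda>s. gamma_proc_law \<gamma> a (2 * \<bar>s\<bar>)) \<in> measurable M (subprob_algebra borel)"
proof (rule measurable_subprob_algebra)
  show "subprob_space (gamma_proc_law \<gamma> a (2 * \<bar>s\<bar>))" for s
    by (rule subprob_space_gamma_law[OF \<gamma> a]) simp
  show "sets (gamma_proc_law \<gamma> a (2 * \<bar>s\<bar>)) = sets borel" for s
    by (simp add: gamma_proc_law_def)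
  fix A :: "real set" assume [measurable]: "A \<in> sets borel"
  have "(\<lambda>s. \<integral>\<^sup>+x. ennreal (gamma_proc_density \<gamma> a (2 * \<bar>s\<bar>) x) * indicator A x \<partial>lborel) \<in> borel_measurable borel"
    unfolding gamma_proc_density_def by measurable
  then show "(\<lambda>s. emeasure (gamma_proc_law \<gamma> a (2 * \<bar>s\<bar>)) A) \<in> borel_measurable M"
    unfolding measurable_cong_sets[OF M refl] gamma_proc_law_def by (simp add: emeasure_density)
qed

text \<open>bind M K only sees K on those points where K is a subprobability measure: if K agrees
  with a measurable kernel K' on a measurable set G of full measure, and K is not a
  subprobability measure outside G, then bind M K = bind M K'.\<close>

lemma bind_cong_improper_kernel:
  fixes K K' :: "'a \<Rightarrow> 'b measure"
  assumes K': "K' \<in> measurable M (subprob_algebra N)"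
    and sets_K: "\<And>x. x \<in> space M \<Longrightarrow> sets (K x) = sets N"
    and G: "G \<in> sets M" "AE x in M. x \<in> G"
    and eq: "\<And>x. x \<in> space M \<Longrightarrow> x \<in> G \<Longrightarrow> K x = K' x"
    and improper: "\<And>x. x \<in> space M \<Longrightarrow> x \<notin> G \<Longrightarrow> \<not> subprob_space (K x)"
    and nonempty: "space M \<noteq> {}"
  shows "bind M K = bind M K'"
proof -
  define S where "S = subprob_algebra N"
  have distr_eq: "distr M S K = distr M S K'"
    unfolding distr_def
  proof (rule measure_of_eq)
    show "sets S \<subseteq> Pow (space S)" by (rule sets.space_closed)
    fix X assume "X \<in> sigma_sets (space S) (sets S)"
    then have X: "X \<in> sets S" by (simp add: sets.sigma_sets_eq)
    have preimage: "K -` X \<inter> space M = (K' -` X \<inter> space M) \<inter> G"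
    proof (intro set_eqI iffI)
      fix x assume x: "x \<in> K -` X \<inter> space M"
      then have "K x \<in> space S" using sets.sets_into_space[OF X] by auto
      then have "x \<in> G" using improper x by (auto simp: S_def space_subprob_algebra)
      then show "x \<in> (K' -` X \<inter> space M) \<inter> G" using x eq by auto
    qed (use eq in auto)
    have "K' -` X \<inter> space M \<in> sets M"
      using K' X unfolding S_def by (rule measurable_sets)
    then show "emeasure M (K -` X \<inter> space M) = emeasure M (K' -` X \<inter> space M)"
      unfolding preimage using G by (intro emeasure_eq_AE) (auto elim!: eventually_mono)
  qed
  have "subprob_algebra (K (SOME x. x \<in> space M)) = S"
    unfolding S_def using nonempty sets_K by (intro subprob_algebra_cong) (metis some_in_eq)
  then have "bind M K = join (distr M S K)"
    using nonempty by (simp add: bind_nonempty)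
  also have "\<dots> = join (distr M S K')" by (simp only: distr_eq)
  also have "\<dots> = bind M K'"
    using K' nonempty unfolding S_def by (rule bind_nonempty''[symmetric])
  finally show ?thesis .
qed

text \<open>Since G_{1,c}(t) is positive almost surely, composing with s \<mapsto> G_{2,a}(2s) is the same
  as composing with the measurable kernel s \<mapsto> G_{2,a}(2|s|).\<close>

lemma gamma_compose_abs:
  assumes a: "0 < a"
  shows "bind (gamma_proc_law 1 c t) (\<lambda>s. gamma_proc_law 2 a (2 * s))
       = bind (gamma_proc_law 1 c t) (\<lambda>s. gamma_proc_law 2 a (2 * \<bar>s\<bar>))"
proof (rule bind_cong_improper_kernel[where G="{0..}"])
  show "(\<lambda>s. gamma_proc_law 2 a (2 * \<bar>s\<bar>)) \<in> measurable (gamma_proc_law 1 c t) (subprob_algebra borel)"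
    by (rule gamma_kernel_measurable[OF _ a]) (simp_all add: gamma_proc_law_def)
  show "AE s in gamma_proc_law 1 c t. s \<in> {0..}"
    unfolding gamma_proc_law_def by (subst AE_density) (auto simp: gamma_proc_density_def)
  show "\<not> subprob_space (gamma_proc_law 2 a (2 * s))" if "s \<notin> {0..}" for s
    using that by (intro gamma2_law_negative_not_subprob[OF a]) simp
qed (simp_all add: gamma_proc_law_def)

lemma emeasure_gamma_mixture:
  assumes c: "0 < c" and b: "0 < b" and t: "0 < t" and A [measurable]: "A \<in> sets borel"
  shows "emeasure (bind (gamma_proc_law 1 c t) (\<lambda>s. gamma_proc_law 2 b (2 * \<bar>s\<bar>))) A
       = (\<integral>\<^sup>+u. \<integral>\<^sup>+y. ennreal (gamma_proc_density 1 c 1 u) * ennreal (gamma_proc_density 1 b 1 y)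
            * indicator A (sqrt (2 * t * u * y)) \<partial>lborel \<partial>lborel)"
proof -
  have kernel: "(\<lambda>s. gamma_proc_law 2 b (2 * \<bar>s\<bar>)) \<in> measurable borel (subprob_algebra borel)"
    by (rule gamma_kernel_measurable[OF _ b]) simp_all
  have [measurable]: "(\<lambda>s. emeasure (gamma_proc_law 2 b (2 * \<bar>s\<bar>)) A) \<in> borel_measurable borel"
    using kernel A by (rule measurable_emeasure_kernel)
  have inner: "emeasure (gamma_proc_law 2 b (2 * \<bar>t * u\<bar>)) A
      = (\<integral>\<^sup>+y. ennreal (gamma_proc_density 1 b 1 y) * indicator A (sqrt (2 * t * u * y)) \<partial>lborel)"
    if u: "0 < u" for u
  proof -
    have T: "0 < 2 * (t * u)" using t u by simp
    have "emeasure (gamma_proc_law 2 b (2 * \<bar>t * u\<bar>)) A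
        = (\<integral>\<^sup>+x. ennreal (gamma_proc_density 2 b (2 * (t * u)) x) * indicator A x \<partial>lborel)"
      unfolding gamma_proc_law_def using T by (simp add: emeasure_density)
    also have "\<dots> = (\<integral>\<^sup>+w. ennreal (gamma_proc_density 1 b (2 * (t * u)) w) * indicator A (sqrt w) \<partial>lborel)"
      by (rule nn_integral_gamma2_sqrt[OF b T]) simp
    also have "\<dots> = (\<integral>\<^sup>+y. ennreal (gamma_proc_density 1 b 1 y) * indicator A (sqrt (2 * (t * u) * y)) \<partial>lborel)"
      by (rule nn_integral_gamma1_scale[OF T b]) simp
    finally show ?thesis by (simp add: mult.assoc)
  qed
  have "emeasure (bind (gamma_proc_law 1 c t) (\<lambda>s. gamma_proc_law 2 b (2 * \<bar>s\<bar>))) A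
      = (\<integral>\<^sup>+s. emeasure (gamma_proc_law 2 b (2 * \<bar>s\<bar>)) A \<partial>gamma_proc_law 1 c t)"
  proof (rule emeasure_bind[OF _ _ A])
    show "(\<lambda>s. gamma_proc_law 2 b (2 * \<bar>s\<bar>)) \<in> measurable (gamma_proc_law 1 c t) (subprob_algebra borel)"
      by (rule gamma_kernel_measurable[OF _ b]) (simp_all add: gamma_proc_law_def)
  qed (simp add: gamma_proc_law_def)
  also have "\<dots> = (\<integral>\<^sup>+s. ennreal (gamma_proc_density 1 c t s) * emeasure (gamma_proc_law 2 b (2 * \<bar>s\<bar>)) A \<partial>lborel)"
    unfolding gamma_proc_law_def[of 1 c t] by (simp add: nn_integral_density)
  also have "\<dots> = (\<integral>\<^sup>+u. ennreal (gamma_proc_density 1 c 1 u) * emeasure (gamma_proc_law 2 b (2 * \<bar>t * u\<bar>)) A \<partial>lborel)"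
    by (rule nn_integral_gamma1_scale[OF t c]) simp
  also have "\<dots> = (\<integral>\<^sup>+u. \<integral>\<^sup>+y. ennreal (gamma_proc_density 1 c 1 u) * ennreal (gamma_proc_density 1 b 1 y)
            * indicator A (sqrt (2 * t * u * y)) \<partial>lborel \<partial>lborel)"
  proof (intro nn_integral_cong)
    fix u :: real
    show "ennreal (gamma_proc_density 1 c 1 u) * emeasure (gamma_proc_law 2 b (2 * \<bar>t * u\<bar>)) A
        = (\<integral>\<^sup>+y. ennreal (gamma_proc_density 1 c 1 u) * ennreal (gamma_proc_density 1 b 1 y)
            * indicator A (sqrt (2 * t * u * y)) \<partial>lborel)"
    proof (cases "0 < u")
      case True
      then show ?thesis
        by (simp add: inner nn_integral_cmult[symmetric] mult.assoc)
    qed (simp add: gamma1_density)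
  qed
  finally show ?thesis .
qed

lemma gamma_mixture_symmetric:
  assumes c: "0 < c" and b: "0 < b" and t: "0 < t"
  shows "bind (gamma_proc_law 1 c t) (\<lambda>s. gamma_proc_law 2 b (2 * \<bar>s\<bar>))
       = bind (gamma_proc_law 1 b t) (\<lambda>s. gamma_proc_law 2 c (2 * \<bar>s\<bar>))"
proof (rule measure_eqI)
  have sets_mixture: "sets (bind (gamma_proc_law 1 a t) (\<lambda>s. gamma_proc_law 2 a' (2 * \<bar>s\<bar>))) = sets borel"
    if "0 < a'" for a a'
    by (rule sets_bind_measurable[OF gamma_kernel_measurable[OF _ that]]) (simp_all add: gamma_proc_law_def)
  show "sets (bind (gamma_proc_law 1 c t) (\<lambda>s. gamma_proc_law 2 b (2 * \<bar>s\<bar>)))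
      = sets (bind (gamma_proc_law 1 b t) (\<lambda>s. gamma_proc_law 2 c (2 * \<bar>s\<bar>)))"
    using sets_mixture[OF b] sets_mixture[OF c] by simp
  fix A assume "A \<in> sets (bind (gamma_proc_law 1 c t) (\<lambda>s. gamma_proc_law 2 b (2 * \<bar>s\<bar>)))"
  then have A [measurable]: "A \<in> sets borel" using sets_mixture[OF b] by simp
  have "emeasure (bind (gamma_proc_law 1 c t) (\<lambda>s. gamma_proc_law 2 b (2 * \<bar>s\<bar>))) A
      = (\<integral>\<^sup>+u. \<integral>\<^sup>+y. ennreal (gamma_proc_density 1 c 1 u) * ennreal (gamma_proc_density 1 b 1 y)
            * indicator A (sqrt (2 * t * u * y)) \<partial>lborel \<partial>lborel)"
    by (rule emeasure_gamma_mixture[OF c b t A])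
  also have "\<dots> = (\<integral>\<^sup>+y. \<integral>\<^sup>+u. ennreal (gamma_proc_density 1 c 1 u) * ennreal (gamma_proc_density 1 b 1 y)
            * indicator A (sqrt (2 * t * u * y)) \<partial>lborel \<partial>lborel)"
    by (rule lborel_pair.Fubini'[symmetric]) measurable
  also have "\<dots> = (\<integral>\<^sup>+u. \<integral>\<^sup>+y. ennreal (gamma_proc_density 1 b 1 u) * ennreal (gamma_proc_density 1 c 1 y)
            * indicator A (sqrt (2 * t * u * y)) \<partial>lborel \<partial>lborel)"
    by (simp only: mult_ac)
  also have "\<dots> = emeasure (bind (gamma_proc_law 1 b t) (\<lambda>s. gamma_proc_law 2 c (2 * \<bar>s\<bar>))) A"
    by (rule emeasure_gamma_mixture[OF b c t A, symmetric])
  finally show "emeasure (bind (gamma_proc_law 1 c t) (\<lambda>s. gamma_proc_law 2 b (2 * \<bar>s\<bar>))) A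
      = emeasure (bind (gamma_proc_law 1 b t) (\<lambda>s. gamma_proc_law 2 c (2 * \<bar>s\<bar>))) A" .
qed

theorem mainTheorem15:
  fixes n :: nat and \<mu> t :: real
  assumes "n \<ge> 1" and "\<mu> > 0" and "t > 0"
  shows "compose_law (gamma_proc_law 1 \<mu> t) (bm_norm_law n)
           = compose_law (gamma_proc_law 1 \<mu> t) (\<lambda>s. gamma_proc_law 2 (real n / 2) (2 * s))
       \<and> compose_law (gamma_proc_law 1 \<mu> t) (\<lambda>s. gamma_proc_law 2 (real n / 2) (2 * s))
           = compose_law (gamma_proc_law 1 (real n / 2) t) (\<lambda>s. gamma_proc_law 2 \<mu> (2 * s))"
proof -
  have half_n: "0 < real n / 2" using \<open>n \<ge> 1\<close> by simp
  show ?thesis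
    unfolding compose_law_def bm_norm_law_gamma[OF \<open>n \<ge> 1\<close>]
      gamma_compose_abs[OF half_n] gamma_compose_abs[OF \<open>\<mu> > 0\<close>]
    using gamma_mixture_symmetric[OF \<open>\<mu> > 0\<close> half_n \<open>t > 0\<close>] by simp
qed

end
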